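(* Let $N\ge 1$ be an integer. If a function class $\mathcal{G}$ of functions $\mathcal{Z}\to\mathbb{R}$ is an $N$-composite of a function class $\mathcal{F}$ of functions $\mathcal{X}\to\mathbb{R}$, then $\mathsf{dis}(\mathcal{G}) \le N\,\mathsf{dis}(\mathcal{F})$.
   Context: For a measurable space $\mathcal{X}$ and a class $\mathcal{F}$ of measurable functions $\mathcal{X}\to\mathbb{R}$, the disagreement coefficient is $$\mathsf{dis}(\mathcal{F}) = \sup_{\varepsilon,\delta>0}\ \sup_{\nu\in\Delta(\mathcal{X})} \frac{\delta^2}{\varepsilon^2}\,\mathbb{P}_{p\sim\nu}\Big(\exists f\in\mathcal{F}:\ \mathbb{E}_{q\sim\nu}[f(q)^2]\le\varepsilon^2\ \text{and}\ |f(p)|>\delta\Big),$$ where $\Delta(\mathcal{X})$ is the set of probability measures on $\mathcal{X}$. A class $\mathcal{G}$ of functions $\mathcal{Z}\to\mathbb{R}$ is an $N$-composite of $\mathcal{F}$ (functions $\mathcal{X}\to\mathbb{R}$) if there is a partition of $\mathcal{Z}$ into disjoint measurable sets $\mathcal{Z}_1,\dots,\mathcal{Z}_N$ and measurable maps $h_i:\mathcal{Z}_i\to\mathcal{X}$, $i\in[N]$, such that for every $g\in\mathcal{G}$ there exist $f_1,\dots,f_N\in\mathcal{F}$ with $g(x)=f_i(h_i(x))$ for all $x\in\mathcal{Z}_i$ and all $i\in[N]$. *)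

theory Defs
  imports "HOL-Probability.Probability"
begin

definition prob_measures :: "'a measure \<Rightarrow> 'a measure set" where
  "prob_measures X = {\<nu>. prob_space \<nu> \<and> sets \<nu> = sets X}"

text \<open>Disagreement coefficient (valued in [0,\<infinity>]); the probability of the
  (possibly non-measurable) event is taken as outer probability.\<close>
definition dis :: "'a measure \<Rightarrow> ('a \<Rightarrow> real) set \<Rightarrow> ennreal" where
  "dis X F = (SUP (\<epsilon>, \<delta>, \<nu>) \<in> {(\<epsilon>::real, \<delta>::real, \<nu>). \<epsilon> > 0 \<and> \<delta> > 0 \<and> \<nu> \<in> prob_measures X}.
      ennreal (\<delta>\<^sup>2 / \<epsilon>\<^sup>2) *
      outer_measure_of \<nu> {p \<in> space X. \<exists>f\<in>F.
          (\<integral>\<^sup>+ q. ennreal ((f q)\<^sup>2) \<partial>\<nu>) \<le> ennreal (\<epsilon>\<^sup>2) \<and> \<bar>f p\<bar> > \<delta>})"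

definition composite :: "nat \<Rightarrow> 'z measure \<Rightarrow> ('z \<Rightarrow> real) set \<Rightarrow> 'x measure \<Rightarrow> ('x \<Rightarrow> real) set \<Rightarrow> bool" where
  "composite N Z G X F \<longleftrightarrow>
     (\<exists>(Zp :: nat \<Rightarrow> 'z set) (h :: nat \<Rightarrow> 'z \<Rightarrow> 'x).
        (\<forall>i<N. Zp i \<in> sets Z) \<and>
        (\<forall>i<N. \<forall>j<N. i \<noteq> j \<longrightarrow> Zp i \<inter> Zp j = {}) \<and>
        (\<Union>i<N. Zp i) = space Z \<and>
        (\<forall>i<N. h i \<in> measurable (restrict_space Z (Zp i)) X) \<and>
        (\<forall>g\<in>G. \<exists>f :: nat \<Rightarrow> 'x \<Rightarrow> real. (\<forall>i<N. f i \<in> F) \<and>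
            (\<forall>i<N. \<forall>x\<in>Zp i. g x = f i (h i x))))"

end

theory Submission
  imports Defs
begin

(* On the part Z_i of the composite, a g that
   is eps-small in L2(nu) and exceeds delta somewhere on Z_i equals f o h_i there, and f is
   (eps / sqrt nu(Z_i))-small in L2 of the law mu_i of h_i under nu conditioned on Z_i. So the
   ratio delta^2/eps^2 gains the factor 1/nu(Z_i), which cancels against
   nu(h_i^-1 B \<inter> Z_i) = nu(Z_i) mu_i(B): each part contributes at most dis F, and a union
   bound over the N parts gives the claim. *)

definition disagreement_set :: "'a measure \<Rightarrow> ('a \<Rightarrow> real) set \<Rightarrow> real \<Rightarrow> real \<Rightarrow> 'a set" where
  "disagreement_set \<nu> F \<epsilon> \<delta> =
     {p. \<exists>f\<in>F. (\<integral>\<^sup>+ q. ennreal ((f q)\<^sup>2) \<partial>\<nu>) \<le> ennreal (\<epsilon>\<^sup>2) \<and> \<bar>f p\<bar> > \<delta>}"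

lemma dis_eq_SUP_disagreement_set:
  "dis X F = (SUP (\<epsilon>, \<delta>, \<nu>) \<in> {(\<epsilon>, \<delta>, \<nu>). \<epsilon> > 0 \<and> \<delta> > 0 \<and> \<nu> \<in> prob_measures X}.
      ennreal (\<delta>\<^sup>2 / \<epsilon>\<^sup>2) * outer_measure_of \<nu> (space X \<inter> disagreement_set \<nu> F \<epsilon> \<delta>))"
  unfolding dis_def disagreement_set_def by (simp add: Int_def)

lemma le_dis:
  assumes "\<epsilon> > 0" "\<delta> > 0" "\<nu> \<in> prob_measures X"
  shows "ennreal (\<delta>\<^sup>2 / \<epsilon>\<^sup>2) * outer_measure_of \<nu> (space X \<inter> disagreement_set \<nu> F \<epsilon> \<delta>) \<le> dis X F"
  unfolding dis_eq_SUP_disagreement_set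
  by (rule SUP_upper2[of "(\<epsilon>, \<delta>, \<nu>)"]) (use assms in auto)

lemma dis_leI:
  assumes "\<And>\<epsilon> \<delta> \<nu>. \<epsilon> > 0 \<Longrightarrow> \<delta> > 0 \<Longrightarrow> \<nu> \<in> prob_measures X \<Longrightarrow>
      ennreal (\<delta>\<^sup>2 / \<epsilon>\<^sup>2) * outer_measure_of \<nu> (space X \<inter> disagreement_set \<nu> F \<epsilon> \<delta>) \<le> c"
  shows "dis X F \<le> c"
  unfolding dis_eq_SUP_disagreement_set by (rule SUP_least) (use assms in auto)

lemma outer_measure_of_union_bound:
  fixes c d :: ennreal
  assumes "A \<subseteq> (\<Union>i<N. C i)" "\<And>i. i < N \<Longrightarrow> C i \<in> sets M"
    and "\<And>i. i < N \<Longrightarrow> c * emeasure M (C i) \<le> d"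
  shows "c * outer_measure_of M A \<le> of_nat N * d"
proof -
  have "outer_measure_of M A \<le> outer_measure_of M (\<Union>i<N. C i)"
    using assms(1) by (rule outer_measure_of_mono)
  also have "\<dots> = emeasure M (\<Union>i<N. C i)"
    using assms(2) by (intro outer_measure_of_eq) auto
  also have "\<dots> \<le> (\<Sum>i<N. emeasure M (C i))"
    using assms(2) by (intro emeasure_subadditive_finite) auto
  finally have "c * outer_measure_of M A \<le> c * (\<Sum>i<N. emeasure M (C i))"
    by (rule mult_left_mono) simp
  also have "\<dots> = (\<Sum>i<N. c * emeasure M (C i))"
    by (rule sum_distrib_left)
  also have "\<dots> \<le> (\<Sum>i<N. d)"
    using assms(3) by (intro sum_mono) simp
  also have "\<dots> = of_nat N * d"
    by simp
  finally show ?thesis .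
qed

definition cond_distr :: "'z measure \<Rightarrow> 'z set \<Rightarrow> 'x measure \<Rightarrow> ('z \<Rightarrow> 'x) \<Rightarrow> 'x measure" where
  "cond_distr \<nu> A X h = scale_measure (ennreal (1 / measure \<nu> A)) (distr (restrict_space \<nu> A) X h)"

lemma sets_cond_distr [simp]: "sets (cond_distr \<nu> A X h) = sets X"
  by (simp add: cond_distr_def)

lemma space_cond_distr [simp]: "space (cond_distr \<nu> A X h) = space X"
  by (simp add: cond_distr_def space_scale_measure)

context
  fixes \<nu> :: "'z measure" and A :: "'z set" and X :: "'x measure" and h :: "'z \<Rightarrow> 'x"
  assumes A: "A \<in> sets \<nu>" and h: "h \<in> measurable (restrict_space \<nu> A) X"
begin

lemma emeasure_cond_distr:
  assumes "B \<in> sets X"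
  shows "emeasure (cond_distr \<nu> A X h) B = ennreal (1 / measure \<nu> A) * emeasure \<nu> (h -` B \<inter> A)"
proof -
  have "emeasure (distr (restrict_space \<nu> A) X h) B = emeasure (restrict_space \<nu> A) (h -` B \<inter> A)"
    using emeasure_distr[OF h assms] by (simp add: space_restrict_space2[OF A])
  also have "\<dots> = emeasure \<nu> (h -` B \<inter> A)"
    using A by (intro emeasure_restrict_space) auto
  finally show ?thesis
    by (simp add: cond_distr_def)
qed

lemma nn_integral_cond_distr:
  assumes "u \<in> borel_measurable X"
  shows "(\<integral>\<^sup>+ x. u x \<partial>cond_distr \<nu> A X h) = ennreal (1 / measure \<nu> A) * (\<integral>\<^sup>+ z. u (h z) * indicator A z \<partial>\<nu>)"
proof -
  have "(\<integral>\<^sup>+ x. u x \<partial>distr (restrict_space \<nu> A) X h) = (\<integral>\<^sup>+ z. u (h z) \<partial>restrict_space \<nu> A)"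
    using h assms by (intro nn_integral_distr) simp_all
  also have "\<dots> = (\<integral>\<^sup>+ z. u (h z) * indicator A z \<partial>\<nu>)"
    using A by (intro nn_integral_restrict_space) auto
  finally show ?thesis
    using assms by (simp add: cond_distr_def nn_integral_scale_measure)
qed

lemma prob_space_cond_distr:
  assumes "finite_measure \<nu>" "measure \<nu> A > 0"
  shows "prob_space (cond_distr \<nu> A X h)"
proof
  have "h -` space X \<inter> A = A"
    using measurable_space[OF h] by (auto simp: space_restrict_space2[OF A])
  moreover have "emeasure \<nu> A = ennreal (measure \<nu> A)"
    using assms(1) by (simp add: finite_measure.emeasure_eq_measure)
  ultimately show "emeasure (cond_distr \<nu> A X h) (space (cond_distr \<nu> A X h)) = 1"
    using assms(2) by (simp add: emeasure_cond_distr ennreal_mult''[symmetric])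
qed

end

lemma disagreement_set_subset_vimage_cond_distr:
  fixes \<nu> :: "'z measure" and X :: "'x measure"
  assumes F: "F \<subseteq> borel_measurable X"
    and A: "A \<in> sets \<nu>" and h: "h \<in> measurable (restrict_space \<nu> A) X"
    and G: "\<And>g. g \<in> G \<Longrightarrow> \<exists>f\<in>F. \<forall>z\<in>A. g z = f (h z)"
    and w: "measure \<nu> A > 0"
  shows "A \<inter> disagreement_set \<nu> G \<epsilon> \<delta>
    \<subseteq> h -` (space X \<inter> disagreement_set (cond_distr \<nu> A X h) F (\<epsilon> / sqrt (measure \<nu> A)) \<delta>)"
proof
  fix z assume "z \<in> A \<inter> disagreement_set \<nu> G \<epsilon> \<delta>"
  then obtain g where z: "z \<in> A" and g: "g \<in> G" "\<bar>g z\<bar> > \<delta>"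
    and g_small: "(\<integral>\<^sup>+ q. ennreal ((g q)\<^sup>2) \<partial>\<nu>) \<le> ennreal (\<epsilon>\<^sup>2)"
    by (auto simp: disagreement_set_def)
  obtain f where f: "f \<in> F" and g_eq: "\<forall>z\<in>A. g z = f (h z)"
    using G[OF g(1)] by blast
  have f_borel: "(\<lambda>x. ennreal ((f x)\<^sup>2)) \<in> borel_measurable X"
    using f F by auto
  have "(\<integral>\<^sup>+ x. ennreal ((f x)\<^sup>2) \<partial>cond_distr \<nu> A X h)
      = ennreal (1 / measure \<nu> A) * (\<integral>\<^sup>+ q. ennreal ((f (h q))\<^sup>2) * indicator A q \<partial>\<nu>)"
    using A h f_borel by (rule nn_integral_cond_distr)
  also have "(\<integral>\<^sup>+ q. ennreal ((f (h q))\<^sup>2) * indicator A q \<partial>\<nu>) = (\<integral>\<^sup>+ q. ennreal ((g q)\<^sup>2) * indicator A q \<partial>\<nu>)"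
    using g_eq by (intro nn_integral_cong) (simp split: split_indicator)
  also have "\<dots> \<le> ennreal (\<epsilon>\<^sup>2)"
    using g_small by (rule order_trans[rotated]) (auto intro!: nn_integral_mono split: split_indicator)
  finally have "(\<integral>\<^sup>+ x. ennreal ((f x)\<^sup>2) \<partial>cond_distr \<nu> A X h) \<le> ennreal (1 / measure \<nu> A) * ennreal (\<epsilon>\<^sup>2)"
    by (simp add: mult_left_mono)
  also have "\<dots> = ennreal ((\<epsilon> / sqrt (measure \<nu> A))\<^sup>2)"
    using w by (simp add: power_divide ennreal_mult''[symmetric])
  finally have f_small: "(\<integral>\<^sup>+ x. ennreal ((f x)\<^sup>2) \<partial>cond_distr \<nu> A X h) \<le> ennreal ((\<epsilon> / sqrt (measure \<nu> A))\<^sup>2)" .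
  have "\<bar>f (h z)\<bar> > \<delta>"
    using g(2) g_eq z by simp
  with f f_small have "h z \<in> disagreement_set (cond_distr \<nu> A X h) F (\<epsilon> / sqrt (measure \<nu> A)) \<delta>"
    unfolding disagreement_set_def by (intro CollectI bexI[of _ f] conjI)
  moreover have "h z \<in> space X"
    using measurable_space[OF h] z by (simp add: space_restrict_space2[OF A])
  ultimately show "z \<in> h -` (space X \<inter> disagreement_set (cond_distr \<nu> A X h) F (\<epsilon> / sqrt (measure \<nu> A)) \<delta>)"
    by simp
qed

lemma le_dis_cond_distr:
  fixes \<nu> :: "'z measure" and X :: "'x measure"
  assumes \<nu>: "prob_space \<nu>" and A: "A \<in> sets \<nu>" and h: "h \<in> measurable (restrict_space \<nu> A) X"
    and w: "measure \<nu> A > 0" and \<epsilon>: "\<epsilon> > 0" and \<delta>: "\<delta> > 0"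
  obtains B where "B \<in> sets X"
    "space X \<inter> disagreement_set (cond_distr \<nu> A X h) F (\<epsilon> / sqrt (measure \<nu> A)) \<delta> \<subseteq> B"
    "ennreal (\<delta>\<^sup>2 / \<epsilon>\<^sup>2) * emeasure \<nu> (h -` B \<inter> A) \<le> dis X F"
proof -
  define \<mu> where "\<mu> = cond_distr \<nu> A X h"
  define \<epsilon>' where "\<epsilon>' = \<epsilon> / sqrt (measure \<nu> A)"
  define S where "S = space X \<inter> disagreement_set \<mu> F \<epsilon>' \<delta>"
  have "S \<subseteq> space \<mu>"
    unfolding S_def \<mu>_def space_cond_distr by (rule Int_lower1)
  from outer_measure_of_attain[OF this]
  obtain B where B: "B \<in> sets \<mu>" "S \<subseteq> B" "outer_measure_of \<mu> S = emeasure \<mu> B"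
    by blast
  have B_X: "B \<in> sets X"
    using B(1) by (simp add: \<mu>_def)
  have "\<mu> \<in> prob_measures X"
    using prob_space_cond_distr[OF A h] \<nu> w by (simp add: prob_measures_def \<mu>_def prob_space_def)
  then have "ennreal (\<delta>\<^sup>2 / \<epsilon>'\<^sup>2) * emeasure \<mu> B \<le> dis X F"
    using le_dis[of \<epsilon>' \<delta> \<mu> X F] \<epsilon> \<delta> w B(3) by (simp add: S_def \<epsilon>'_def)
  moreover have "emeasure \<nu> (h -` B \<inter> A) = ennreal (measure \<nu> A) * emeasure \<mu> B"
    using emeasure_cond_distr[OF A h B_X] w
    by (simp add: \<mu>_def mult.assoc[symmetric] ennreal_mult''[symmetric])
  ultimately have "ennreal (\<delta>\<^sup>2 / \<epsilon>\<^sup>2) * emeasure \<nu> (h -` B \<inter> A) \<le> dis X F"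
    using w by (simp add: \<epsilon>'_def power_divide mult.assoc[symmetric] ennreal_mult''[symmetric])
  with B_X B(2) show thesis
    by (intro that) (simp_all add: S_def \<mu>_def \<epsilon>'_def)
qed

lemma disagreement_set_part_cover:
  fixes \<nu> :: "'z measure" and X :: "'x measure"
  assumes F: "F \<subseteq> borel_measurable X"
    and \<nu>: "prob_space \<nu>" and sets_\<nu>: "sets \<nu> = sets Z"
    and A: "A \<in> sets Z" and h: "h \<in> measurable (restrict_space Z A) X"
    and G: "\<And>g. g \<in> G \<Longrightarrow> \<exists>f\<in>F. \<forall>z\<in>A. g z = f (h z)"
    and \<epsilon>: "\<epsilon> > 0" and \<delta>: "\<delta> > 0"
  shows "\<exists>C\<in>sets \<nu>. A \<inter> disagreement_set \<nu> G \<epsilon> \<delta> \<subseteq> C \<and> ennreal (\<delta>\<^sup>2 / \<epsilon>\<^sup>2) * emeasure \<nu> C \<le> dis X F"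
proof -
  have A_\<nu>: "A \<in> sets \<nu>"
    using A sets_\<nu> by simp
  have h_\<nu>: "h \<in> measurable (restrict_space \<nu> A) X"
    using h by (simp add: measurable_cong_sets[OF sets_restrict_space_cong[OF sets_\<nu>] refl])
  show ?thesis
  proof (cases "measure \<nu> A = 0")
    case True
    then have "emeasure \<nu> A = 0"
      using \<nu> by (metis finite_measure.emeasure_eq_measure prob_space_def ennreal_0)
    with A_\<nu> show ?thesis by auto
  next
    case False
    then have w: "measure \<nu> A > 0"
      using measure_nonneg[of \<nu> A] by linarith
    obtain B where B: "B \<in> sets X"
      "space X \<inter> disagreement_set (cond_distr \<nu> A X h) F (\<epsilon> / sqrt (measure \<nu> A)) \<delta> \<subseteq> B"
      "ennreal (\<delta>\<^sup>2 / \<epsilon>\<^sup>2) * emeasure \<nu> (h -` B \<inter> A) \<le> dis X F"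
      by (rule le_dis_cond_distr[OF \<nu> A_\<nu> h_\<nu> w \<epsilon> \<delta>])
    have "h -` B \<inter> A \<in> sets \<nu>"
      using measurable_sets[OF h_\<nu> B(1)] A_\<nu> by (simp add: sets_restrict_space_iff)
    moreover have "A \<inter> disagreement_set \<nu> G \<epsilon> \<delta> \<subseteq> h -` B \<inter> A"
      using disagreement_set_subset_vimage_cond_distr[OF F A_\<nu> h_\<nu> G w] B(2) by blast
    ultimately show ?thesis
      using B(3) by blast
  qed
qed

lemma compositeE:
  assumes "composite N Z G X F"
  obtains Zp h where "\<And>i. i < N \<Longrightarrow> Zp i \<in> sets Z" "(\<Union>i<N. Zp i) = space Z"
    "\<And>i. i < N \<Longrightarrow> h i \<in> measurable (restrict_space Z (Zp i)) X"
    "\<And>g i. g \<in> G \<Longrightarrow> i < N \<Longrightarrow> \<exists>f\<in>F. \<forall>z\<in>Zp i. g z = f (h i z)"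
proof -
  from assms obtain Zp h where Zp: "\<forall>i<N. Zp i \<in> sets Z" and cover: "(\<Union>i<N. Zp i) = space Z"
    and h: "\<forall>i<N. h i \<in> measurable (restrict_space Z (Zp i)) X"
    and G: "\<forall>g\<in>G. \<exists>f. (\<forall>i<N. f i \<in> F) \<and> (\<forall>i<N. \<forall>x\<in>Zp i. g x = f i (h i x))"
    unfolding composite_def by (elim exE conjE) (rule that)
  show thesis
  proof (rule that)
    fix g i assume "g \<in> G" "i < N"
    with G obtain f where "\<forall>i<N. f i \<in> F" "\<forall>i<N. \<forall>z\<in>Zp i. g z = f i (h i z)"
      by auto
    with \<open>i < N\<close> show "\<exists>f\<in>F. \<forall>z\<in>Zp i. g z = f (h i z)"
      by auto
  qed (use Zp cover h in auto)
qed

theorem mainTheorem4: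
  fixes N :: nat and Z :: "'z measure" and X :: "'x measure"
    and G :: "('z \<Rightarrow> real) set" and F :: "('x \<Rightarrow> real) set"
  assumes "N \<ge> 1"
    and "F \<subseteq> borel_measurable X"
    and "G \<subseteq> borel_measurable Z"
    and "composite N Z G X F"
  shows "dis Z G \<le> of_nat N * dis X F"
proof (rule dis_leI)
  fix \<epsilon> \<delta> :: real and \<nu> assume \<epsilon>: "\<epsilon> > 0" and \<delta>: "\<delta> > 0" and \<nu>: "\<nu> \<in> prob_measures Z"
  then have prob: "prob_space \<nu>" and sets_\<nu>: "sets \<nu> = sets Z"
    by (auto simp: prob_measures_def)
  from assms(4) obtain Zp h where Zp: "\<And>i. i < N \<Longrightarrow> Zp i \<in> sets Z" and cover: "(\<Union>i<N. Zp i) = space Z"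
    and h: "\<And>i. i < N \<Longrightarrow> h i \<in> measurable (restrict_space Z (Zp i)) X"
    and G: "\<And>g i. g \<in> G \<Longrightarrow> i < N \<Longrightarrow> \<exists>f\<in>F. \<forall>z\<in>Zp i. g z = f (h i z)"
    by (rule compositeE) blast
  have "\<exists>C\<in>sets \<nu>. Zp i \<inter> disagreement_set \<nu> G \<epsilon> \<delta> \<subseteq> C \<and> ennreal (\<delta>\<^sup>2 / \<epsilon>\<^sup>2) * emeasure \<nu> C \<le> dis X F"
    if "i < N" for i
    using disagreement_set_part_cover[OF assms(2) prob sets_\<nu> Zp h G \<epsilon> \<delta>] that by blast
  then obtain C where C: "\<And>i. i < N \<Longrightarrow> C i \<in> sets \<nu>"
    "\<And>i. i < N \<Longrightarrow> Zp i \<inter> disagreement_set \<nu> G \<epsilon> \<delta> \<subseteq> C i"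
    "\<And>i. i < N \<Longrightarrow> ennreal (\<delta>\<^sup>2 / \<epsilon>\<^sup>2) * emeasure \<nu> (C i) \<le> dis X F"
    by metis
  have "space Z \<inter> disagreement_set \<nu> G \<epsilon> \<delta> \<subseteq> (\<Union>i<N. C i)"
    using C(2) cover by blast
  then show "ennreal (\<delta>\<^sup>2 / \<epsilon>\<^sup>2) * outer_measure_of \<nu> (space Z \<inter> disagreement_set \<nu> G \<epsilon> \<delta>)
      \<le> of_nat N * dis X F"
    using C(1,3) by (rule outer_measure_of_union_bound)
qed

end
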